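(* Let $\mu\in\mathbb{R}$ and $\nu>0$ be constants, and let $G$ be one of the functions $$G_1(t)=\frac{1+(t/2+\mu)^2}{1+(t+\mu)^2},\qquad G_2(t)=\frac{(t/2+\nu)^2}{(t+\nu)^2}.$$ Let $\alpha\in(\frac12,1)$. If $t>0$ and $G(t)\ge\alpha$, then $G(t')>\alpha$ for every $0<t'<t$. *)

theory Defs
  imports Complex_Main
begin

definition G1 :: "real \<Rightarrow> real \<Rightarrow> real" where
  "G1 \<mu> t = (1 + (t/2 + \<mu>)^2) / (1 + (t + \<mu>)^2)"

definition G2 :: "real \<Rightarrow> real \<Rightarrow> real" where
  "G2 \<nu> t = (t/2 + \<nu>)^2 / (t + \<nu>)^2"

end

theory Submission
  imports Defs
begin

text \<open>For \<open>G2\<close> the claim is just strict monotonicity: \<open>(t/2 + \<nu>)/(t + \<nu>)\<close> is positive and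
  strictly decreasing for \<open>t \<ge> 0\<close>. For \<open>G1\<close>, the inequality \<open>G1 \<mu> s \<ge> \<alpha>\<close> says that a quadratic
  in \<open>s\<close> with leading coefficient \<open>1/4 - \<alpha> < 0\<close> and value \<open>(1 - \<alpha>)(1 + \<mu>\<^sup>2) > 0\<close> at \<open>0\<close>
  is nonnegative; by concavity it is then positive on the open interval between \<open>0\<close> and \<open>s\<close>.\<close>

lemma concave_quadratic_pos_between:
  fixes a b c t t' :: real
  assumes "a < 0" and "0 < c" and "0 \<le> a * t\<^sup>2 + b * t + c"
    and "0 < t'" and "t' < t"
  shows "0 < a * t'\<^sup>2 + b * t' + c"
proof -
  have interpolation: "t * (a * t'\<^sup>2 + b * t' + c)
      = (t - t') * c + t' * (a * t\<^sup>2 + b * t + c) - a * t * t' * (t - t')"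
    by (simp add: algebra_simps power2_eq_square)
  have "0 < (t - t') * c" and "0 \<le> t' * (a * t\<^sup>2 + b * t + c)"
    and "0 < - a * t * t' * (t - t')"
    using assms by (simp_all add: mult_neg_pos)
  then have "0 < t * (a * t'\<^sup>2 + b * t' + c)"
    unfolding interpolation by linarith
  with assms show ?thesis
    by (simp add: zero_less_mult_iff)
qed

lemma G1_minus_eq:
  "G1 \<mu> s - \<alpha> = ((1/4 - \<alpha>) * s\<^sup>2 + (1 - 2 * \<alpha>) * \<mu> * s + (1 - \<alpha>) * (1 + \<mu>\<^sup>2))
                  / (1 + (s + \<mu>)\<^sup>2)"
proof -
  have "1 + (s + \<mu>)\<^sup>2 \<noteq> 0"
    by (smt (verit) zero_le_power2)
  then show ?thesis
    unfolding G1_def by (simp add: field_simps power2_eq_square)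
qed

lemma G1_gt_between:
  fixes \<mu> \<alpha> t t' :: real
  assumes "1/4 < \<alpha>" and "\<alpha> < 1" and "\<alpha> \<le> G1 \<mu> t"
    and "0 < t'" and "t' < t"
  shows "\<alpha> < G1 \<mu> t'"
proof -
  define q where "q s = (1/4 - \<alpha>) * s\<^sup>2 + (1 - 2 * \<alpha>) * \<mu> * s + (1 - \<alpha>) * (1 + \<mu>\<^sup>2)"
    for s :: real
  have denom_pos: "0 < 1 + (s + \<mu>)\<^sup>2" for s :: real
    by (simp add: add_pos_nonneg)
  have sign: "G1 \<mu> s - \<alpha> = q s / (1 + (s + \<mu>)\<^sup>2)" for s
    unfolding q_def by (rule G1_minus_eq)
  have "0 \<le> q t / (1 + (t + \<mu>)\<^sup>2)"
    using assms(3) sign[of t] by simp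
  then have "0 \<le> q t"
    using denom_pos[of t] by (simp add: zero_le_divide_iff)
  moreover have "0 < (1 - \<alpha>) * (1 + \<mu>\<^sup>2)"
    using assms(2) by (simp add: add_pos_nonneg)
  ultimately have "0 < q t'"
    using assms concave_quadratic_pos_between[of "1/4 - \<alpha>"] unfolding q_def by simp
  then have "0 < q t' / (1 + (t' + \<mu>)\<^sup>2)"
    using denom_pos[of t'] by simp
  then show ?thesis
    using sign[of t'] by simp
qed

lemma G2_strict_decreasing:
  fixes \<nu> t t' :: real
  assumes "0 < \<nu>" and "0 \<le> t'" and "t' < t"
  shows "G2 \<nu> t < G2 \<nu> t'"
proof -
  have "(t/2 + \<nu>) / (t + \<nu>) < (t'/2 + \<nu>) / (t' + \<nu>)"
    using assms by (simp add: divide_simps algebra_simps)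
  moreover have "0 \<le> (t/2 + \<nu>) / (t + \<nu>)"
    using assms by simp
  ultimately have "((t/2 + \<nu>) / (t + \<nu>))\<^sup>2 < ((t'/2 + \<nu>) / (t' + \<nu>))\<^sup>2"
    by (rule power_strict_mono) simp
  then show ?thesis
    by (simp add: G2_def power_divide)
qed

theorem lemma3p1:
  fixes \<mu> \<nu> \<alpha> :: real and G :: "real \<Rightarrow> real"
  assumes "\<nu> > 0"
    and "G = G1 \<mu> \<or> G = G2 \<nu>"
    and "1/2 < \<alpha>" and "\<alpha> < 1"
    and "t > 0" and "G t \<ge> \<alpha>"
    and "0 < t'" and "t' < t"
  shows "G t' > \<alpha>"
  using assms(2)
proof
  assume "G = G1 \<mu>"
  with assms show ?thesis
    using G1_gt_between[of \<alpha> \<mu> t t'] by simp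
next
  assume "G = G2 \<nu>"
  with assms show ?thesis
    using G2_strict_decreasing[of \<nu> t' t] by simp
qed

end
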